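(* Let $n,d\ge 2$ be integers with $d\ne 3$, let $\mathbf a=(0,\dots,0,1,d-1)\in V(n,d)$ and $\Gamma=V(n,d)\setminus\{\mathbf a\}$. Let $x,y,z\in\Gamma$. If the chains $(x,y)$, $(y,z)$ and $(x,z)$ are minimal, then the chain $(x,y,z)$ is minimal.
   Context: $V(n,d)=\{\mathbf b\in\mathbb N^n:\sum_i b_i=d\}$. Order $V(n,d)$ lexicographically: $b<c$ iff the first nonzero coordinate of $c-b$ is positive (so $(0,\dots,0,d)$ is the smallest element). For $k\ge1$, a chain of length $k$ is a tuple $(u^1,\dots,u^k)\in V(n,d)^k$ (its links); its $\mathbf a$-degree is the number of indices $j$ with $u^j=\mathbf a$. Two chains of length $k$ with the same sum $u^1+\cdots+u^k$ are compared as follows: $(u^1,\dots,u^k)<(w^1,\dots,w^k)$ iff either the $\mathbf a$-degree of $u$ is smaller than that of $w$, or they have the same $\mathbf a$-degree and $(u^1,\dots,u^k)$ is lexicographically smaller than $(w^1,\dots,w^k)$ (comparing $u^1$ with $w^1$ first, using the order on $V(n,d)$). A chain $(u^1,\dots,u^k)$ is minimal if it is the smallest among all chains $(w^1,\dots,w^k)\in V(n,d)^k$ with $\sum_j w^j=\sum_j u^j$. *)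

theory Defs
  imports Main
begin

text \<open>Vectors in N^n are functions nat => nat supported on {0..<n} (coordinates 0..n-1).\<close>
definition V :: "nat \<Rightarrow> nat \<Rightarrow> (nat \<Rightarrow> nat) set" where
  "V n d = {b. (\<forall>i\<ge>n. b i = 0) \<and> (\<Sum>i<n. b i) = d}"

definition vlex_less :: "(nat \<Rightarrow> nat) \<Rightarrow> (nat \<Rightarrow> nat) \<Rightarrow> bool" where
  "vlex_less b c = (\<exists>i. (\<forall>j<i. b j = c j) \<and> b i < c i)"

definition avec :: "nat \<Rightarrow> nat \<Rightarrow> nat \<Rightarrow> nat" where
  "avec n d = (\<lambda>i. if i = n - 2 then 1 else if i = n - 1 then d - 1 else 0)"

definition adeg :: "(nat \<Rightarrow> nat) \<Rightarrow> (nat \<Rightarrow> nat) list \<Rightarrow> nat" where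
  "adeg a u = length (filter (\<lambda>v. v = a) u)"

definition chain_sum :: "(nat \<Rightarrow> nat) list \<Rightarrow> nat \<Rightarrow> nat" where
  "chain_sum u = (\<lambda>i. sum_list (map (\<lambda>v. v i) u))"

definition chain_lex_less :: "(nat \<Rightarrow> nat) list \<Rightarrow> (nat \<Rightarrow> nat) list \<Rightarrow> bool" where
  "chain_lex_less u w =
     (\<exists>i < length u. (\<forall>j<i. u ! j = w ! j) \<and> vlex_less (u ! i) (w ! i))"

definition chain_less :: "(nat \<Rightarrow> nat) \<Rightarrow> (nat \<Rightarrow> nat) list \<Rightarrow> (nat \<Rightarrow> nat) list \<Rightarrow> bool" where
  "chain_less a u w = (adeg a u < adeg a w \<or> (adeg a u = adeg a w \<and> chain_lex_less u w))"

definition is_chain :: "nat \<Rightarrow> nat \<Rightarrow> nat \<Rightarrow> (nat \<Rightarrow> nat) list \<Rightarrow> bool" where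
  "is_chain n d k u = (k \<ge> 1 \<and> length u = k \<and> set u \<subseteq> V n d)"

definition minimal_chain :: "nat \<Rightarrow> nat \<Rightarrow> (nat \<Rightarrow> nat) \<Rightarrow> (nat \<Rightarrow> nat) list \<Rightarrow> bool" where
  "minimal_chain n d a u = (is_chain n d (length u) u \<and>
     (\<forall>w. is_chain n d (length u) w \<and> chain_sum w = chain_sum u \<longrightarrow>
          w = u \<or> chain_less a u w))"

end

theory Submission
  imports Defs
begin

(* Let a = e_p + (d-1) e_(p+1) with p = n - 2. In a minimal a-free pair (x, y) no exchange of
   units between the links may produce an a-free pair with a lexicographically smaller first
   link. This forces the support of y to lie weakly below that of x, unless x is one of the two
   neighbours 2 e_p + (d-2) e_(p+1) and e_i + (d-1) e_(p+1) (i < p) of a, in which case y is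
   tightly constrained. With these shapes known for (x, y), (x, z)
   and (y, z), an a-free w <= x + y + z of degree d that is lexicographically below x is impossible:
   when the supports are ordered for degree reasons, in the neighbour cases because w would lie below a
   coordinatewise and hence equal a (for x = 2 e_p + (d-2) e_(p+1) this needs y and z not both to
   have last coordinate 1, which is where d <> 3 enters). So every competitor of (x, y, z) starts
   with a link above x or with x itself, and in the latter case the minimality of (y, z) decides. *)

lemma V_support: "v \<in> V n d \<Longrightarrow> 0 < v k \<Longrightarrow> k < n"
  by (cases "k < n") (auto simp: V_def)

lemma V_exchange:
  assumes "\<forall>k. u k + v k = x k + y k" "x \<in> V n d1" "y \<in> V n d2" "v \<in> V n d3"
  shows "u \<in> V n (d1 + d2 - d3)"
proof -
  have "(\<Sum>k<n. u k) + (\<Sum>k<n. v k) = (\<Sum>k<n. x k) + (\<Sum>k<n. y k)"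
    using assms(1) by (simp add: sum.distrib[symmetric])
  moreover have "\<forall>k\<ge>n. u k = 0"
  proof (intro allI impI)
    fix k assume "n \<le> k"
    then have "x k = 0" "y k = 0" using assms(2,3) by (auto simp: V_def)
    then show "u k = 0" using assms(1) by (metis add_is_0)
  qed
  ultimately show ?thesis
    using assms(2-4) by (auto simp: V_def)
qed

lemma V_complement:
  assumes "x \<in> V n d" "y \<in> V n d" "x' \<in> V n d" "\<forall>k. x' k \<le> x k + y k"
  shows "(\<lambda>k. x k + y k - x' k) \<in> V n d"
  using V_exchange[of "\<lambda>k. x k + y k - x' k" x' x y n d d d] assms by simp

lemma unit_in_V: "i < n \<Longrightarrow> (\<lambda>k. if k = i then 1 else 0) \<in> V n 1"
  by (auto simp: V_def)

lemma V_shift: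
  assumes "x \<in> V n d" "0 < x i" "j < n" "i \<noteq> j"
  shows "x(i := x i - 1, j := x j + 1) \<in> V n d"
proof -
  have "i < n" using V_support assms(1,2) .
  then show ?thesis
    using V_exchange[of "x(i := x i - 1, j := x j + 1)" "\<lambda>k. if k = i then 1 else 0" x
        "\<lambda>k. if k = j then 1 else 0" n d 1 1] assms unit_in_V
    by auto
qed

lemma V_le_imp_eq:
  assumes "w \<in> V n d" "v \<in> V n d" "\<forall>k. w k \<le> v k"
  shows "w = v"
proof (rule ccontr)
  assume "w \<noteq> v"
  then obtain k where "w k < v k" using assms(3) le_neq_implies_less by blast
  then have "k < n" using V_support[OF assms(2)] by simp
  then have "(\<Sum>k<n. w k) < (\<Sum>k<n. v k)"
    using assms(3) \<open>w k < v k\<close> by (intro sum_strict_mono_ex1) auto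
  then show False using assms(1,2) by (simp add: V_def)
qed

lemma V_exceeds_after_first_difference:
  assumes "w \<in> V n d" "x \<in> V n d" "\<forall>j<i. w j = x j" "w i < x i"
  shows "\<exists>k>i. x k < w k"
proof (rule ccontr)
  assume "\<not> ?thesis"
  then have le: "\<forall>k. w k \<le> x k"
    using assms(3,4) by (metis less_or_eq_imp_le linorder_neqE_nat not_le)
  show False using V_le_imp_eq[OF assms(1,2) le] assms(4) by simp
qed

lemma vlex_less_irrefl: "\<not> vlex_less b b"
  by (auto simp: vlex_less_def)

lemma vlex_less_asym:
  assumes "vlex_less b c" shows "\<not> vlex_less c b"
proof
  assume "vlex_less c b"
  then obtain j where "\<forall>k<j. c k = b k" "c j < b j" by (auto simp: vlex_less_def)
  moreover obtain i where "\<forall>k<i. b k = c k" "b i < c i" using assms by (auto simp: vlex_less_def)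
  ultimately show False
    by (cases i j rule: linorder_cases) (auto dest: spec[where x = i] spec[where x = j])
qed

lemma vlex_less_linear:
  assumes "b \<noteq> c" shows "vlex_less b c \<or> vlex_less c b"
proof -
  obtain k where "b k \<noteq> c k" using assms by blast
  define m where "m = (LEAST k. b k \<noteq> c k)"
  have m: "b m \<noteq> c m" unfolding m_def by (rule LeastI) fact
  have below: "\<forall>j<m. b j = c j" unfolding m_def using not_less_Least by blast
  show ?thesis
  proof (cases "b m < c m")
    case True
    then show ?thesis using below unfolding vlex_less_def by blast
  next
    case False
    then have "c m < b m" using m by simp
    then show ?thesis using below unfolding vlex_less_def by (metis (full_types))
  qed
qed

lemma chain_lex_less_Nil [simp]: "\<not> chain_lex_less [] w"
  by (simp add: chain_lex_less_def)

lemma chain_lex_less_Cons [simp]: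
  "chain_lex_less (v # u) (v' # w) \<longleftrightarrow> vlex_less v v' \<or> (v = v' \<and> chain_lex_less u w)"
  by (auto simp: chain_lex_less_def Ex_less_Suc2 All_less_Suc2)

lemma adeg_eq_0_iff: "adeg a u = 0 \<longleftrightarrow> a \<notin> set u"
  by (auto simp: adeg_def filter_empty_conv)

lemma chain_less_iff_chain_lex_less:
  "a \<notin> set u \<Longrightarrow> a \<notin> set w \<Longrightarrow> chain_less a u w \<longleftrightarrow> chain_lex_less u w"
  by (simp add: chain_less_def adeg_eq_0_iff[THEN iffD2])

lemma chain_less_if_mem:
  "a \<notin> set u \<Longrightarrow> a \<in> set w \<Longrightarrow> chain_less a u w"
  by (metis adeg_eq_0_iff chain_less_def gr0I)

lemma minimal_chain_lex_least:
  assumes "minimal_chain n d a u" "a \<notin> set u"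
    and "is_chain n d (length u) w" "chain_sum w = chain_sum u" "a \<notin> set w"
  shows "w = u \<or> chain_lex_less u w"
  using assms chain_less_iff_chain_lex_less unfolding minimal_chain_def by blast

definition two_point :: "nat \<Rightarrow> nat \<Rightarrow> nat \<Rightarrow> nat \<Rightarrow> nat \<Rightarrow> nat" where
  "two_point i c j e = (\<lambda>k. if k = i then c else if k = j then e else 0)"

lemma two_point_in_V:
  assumes "i \<noteq> j" "i < n" "j < n"
  shows "two_point i c j e \<in> V n (c + e)"
proof -
  have "(\<Sum>k<n. two_point i c j e k) = (\<Sum>k<n. (if k = i then c else 0) + (if k = j then e else 0))"
    using assms(1) by (intro sum.cong) (auto simp: two_point_def)
  then show ?thesis
    using assms by (auto simp: V_def sum.distrib two_point_def)
qed

lemma avec_Suc_Suc: "avec (Suc (Suc p)) d = two_point p 1 (Suc p) (d - 1)"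
  by (auto simp: avec_def two_point_def)

definition support_le :: "(nat \<Rightarrow> nat) \<Rightarrow> (nat \<Rightarrow> nat) \<Rightarrow> bool" where
  "support_le y x \<longleftrightarrow> (\<forall>i j. 0 < x i \<longrightarrow> 0 < y j \<longrightarrow> j \<le> i)"

lemma support_le_zero: "support_le y x \<Longrightarrow> 0 < x i \<Longrightarrow> i < j \<Longrightarrow> y j = 0"
  unfolding support_le_def by (meson leD not_gr0)

lemma not_vlex_less_if_support_le:
  assumes "w \<in> V n d" "x \<in> V n d" "support_le y x" "support_le z x"
    and "\<forall>k. w k \<le> x k + y k + z k"
  shows "\<not> vlex_less w x"
proof
  assume "vlex_less w x"
  then obtain i where below: "\<forall>j<i. w j = x j" and "w i < x i"
    by (auto simp: vlex_less_def)
  then obtain k where "i < k" "x k < w k"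
    using V_exceeds_after_first_difference assms(1,2) by blast
  then have "0 < y k \<or> 0 < z k"
    using assms(5)[rule_format, of k] by linarith
  moreover have "0 < x i" using \<open>w i < x i\<close> by simp
  ultimately have "k \<le> i"
    using assms(3,4) unfolding support_le_def by blast
  then show False using \<open>i < k\<close> by simp
qed

lemma fun_upd_shift_inverse:
  fixes x u :: "nat \<Rightarrow> nat"
  assumes "x(i := x i - 1, j := x j + 1) = u" "0 < x i" "i \<noteq> j"
  shows "x = u(i := u i + 1, j := u j - 1)"
proof
  fix k show "x k = (u(i := u i + 1, j := u j - 1)) k"
    using fun_cong[OF assms(1), of k] assms(2,3) by (cases "k = i"; cases "k = j") auto
qed

locale avec_setting =
  fixes p d :: nat
  assumes two_le_d: "2 \<le> d"
begin

abbreviation n :: nat where "n \<equiv> Suc (Suc p)"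

abbreviation a :: "nat \<Rightarrow> nat" where "a \<equiv> avec n d"

lemma two_point_last_in_V: "i \<le> p \<Longrightarrow> c \<le> d \<Longrightarrow> two_point i c (Suc p) (d - c) \<in> V n d"
  using two_point_in_V[of i "Suc p" n c "d - c"] by simp

lemma V_last_two: "v \<in> V n d \<Longrightarrow> \<forall>k<p. v k = 0 \<Longrightarrow> v p + v (Suc p) = d"
  by (simp add: V_def)

lemma a_in_V: "a \<in> V n d"
  using two_point_last_in_V[of p 1] two_le_d by (simp add: avec_Suc_Suc)

lemma vlex_less_V_first_difference:
  assumes "vlex_less w x" "w \<in> V n d" "x \<in> V n d"
  obtains i where "i \<le> p" "\<forall>j<i. w j = x j" "w i < x i"
proof -
  obtain i where below: "\<forall>j<i. w j = x j" and "w i < x i"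
    using assms(1) by (auto simp: vlex_less_def)
  moreover obtain k where "i < k" "x k < w k"
    using V_exceeds_after_first_difference assms(2,3) below \<open>w i < x i\<close> by blast
  moreover have "k < n" using V_support[OF assms(2)] \<open>x k < w k\<close> by simp
  ultimately show thesis using that[of i] by simp
qed

definition minimal_pair :: "(nat \<Rightarrow> nat) \<Rightarrow> (nat \<Rightarrow> nat) \<Rightarrow> bool" where
  "minimal_pair x y \<longleftrightarrow> minimal_chain n d a [x, y] \<and> x \<noteq> a \<and> y \<noteq> a"

lemma minimal_pair_in_V: "minimal_pair x y \<Longrightarrow> x \<in> V n d \<and> y \<in> V n d"
  by (simp add: minimal_pair_def minimal_chain_def is_chain_def)

lemma minimal_pair_fst_least:
  assumes "minimal_pair x y" "x' \<in> V n d" "\<forall>k. x' k \<le> x k + y k"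
    and "x' \<noteq> a" "(\<lambda>k. x k + y k - x' k) \<noteq> a"
  shows "\<not> vlex_less x' x"
proof -
  define y' where "y' = (\<lambda>k. x k + y k - x' k)"
  have "y' \<in> V n d"
    unfolding y'_def using V_complement minimal_pair_in_V[OF assms(1)] assms(2,3) by blast
  then have "is_chain n d (length [x, y]) [x', y']"
    using assms(2) by (simp add: is_chain_def)
  moreover have "chain_sum [x', y'] = chain_sum [x, y]"
    using assms(3) by (auto simp: chain_sum_def y'_def)
  ultimately have "[x', y'] = [x, y] \<or> chain_lex_less [x, y] [x', y']"
    using assms(1,4,5) unfolding minimal_pair_def y'_def
    by (intro minimal_chain_lex_least) auto
  then show ?thesis
    using vlex_less_irrefl vlex_less_asym by auto
qed

lemma minimal_pair_not_snd_less: "minimal_pair x y \<Longrightarrow> \<not> vlex_less y x"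
  using minimal_pair_fst_least[of x y y] minimal_pair_in_V by (auto simp: minimal_pair_def)

lemma minimal_pair_shift_eq_a:
  assumes "minimal_pair x y" "i < j" "0 < x i" "0 < y j"
  shows "x(i := x i - 1, j := x j + 1) = a"
proof -
  define x' where "x' = x(i := x i - 1, j := x j + 1)"
  have xV: "x \<in> V n d" and yV: "y \<in> V n d" using minimal_pair_in_V[OF assms(1)] by auto
  have "j < n" using V_support[OF yV assms(4)] .
  have x'V: "x' \<in> V n d" unfolding x'_def using V_shift[OF xV assms(3) \<open>j < n\<close>] assms(2) by simp
  have le: "\<forall>k. x' k \<le> x k + y k" using assms(2,4) by (auto simp: x'_def)
  have less: "vlex_less x' x"
    unfolding vlex_less_def using assms(2,3) by (intro exI[of _ i]) (auto simp: x'_def)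
  txt \<open>Otherwise y = d e_(p+1) is the lexicographically least element of V n d, and the swapped
    pair (y, x) would beat (x, y).\<close>
  have y'_ne_a: "(\<lambda>k. x k + y k - x' k) \<noteq> a"
  proof
    assume y'_a: "(\<lambda>k. x k + y k - x' k) = a"
    have "y i + 1 = a i" using fun_cong[OF y'_a, of i] assms(2,3) by (simp add: x'_def)
    then have "i = p" "j = Suc p"
      using assms(2) \<open>j < n\<close> by (auto simp: avec_Suc_Suc two_point_def split: if_splits)
    have y_low: "y k = 0" if "k \<le> p" for k
      using fun_cong[OF y'_a, of k] that \<open>y i + 1 = a i\<close> \<open>i = p\<close> \<open>j = Suc p\<close>
      by (cases "k = p") (auto simp: x'_def avec_Suc_Suc two_point_def)
    have "x \<noteq> y" using assms(3) y_low[of i] \<open>i = p\<close> by auto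
    then have "vlex_less x y"
      using vlex_less_linear minimal_pair_not_snd_less[OF assms(1)] by blast
    then obtain m where "\<forall>k<m. x k = y k" "x m < y m" by (auto simp: vlex_less_def)
    then have "p < m" using y_low[of m] by (cases "m \<le> p") auto
    then show False
      using \<open>\<forall>k<m. x k = y k\<close> y_low[of p] assms(3) \<open>i = p\<close> by auto
  qed
  then show ?thesis
    using minimal_pair_fst_least[OF assms(1) x'V le] less unfolding x'_def by blast
qed

lemma minimal_pair_agrees_off_shift:
  assumes "minimal_pair x y" "i < j" "0 < x i" "0 < y j" "k \<noteq> i" "k \<noteq> j"
  shows "x k = a k"
  using fun_cong[OF minimal_pair_shift_eq_a[OF assms(1-4)], of k] assms(5,6) by simp

lemma minimal_pair_last_le_1:
  assumes "minimal_pair x y" "x = two_point p 2 (Suc p) (d - 2)"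
  shows "y (Suc p) \<le> 1"
proof (rule ccontr)
  assume "\<not> y (Suc p) \<le> 1"
  define x' where "x' = two_point p 0 (Suc p) d"
  have "x' \<in> V n d" using two_point_last_in_V[of p 0] by (simp add: x'_def)
  moreover have "\<forall>k. x' k \<le> x k + y k"
    using assms(2) \<open>\<not> y (Suc p) \<le> 1\<close> by (auto simp: x'_def two_point_def)
  moreover have "x' p \<noteq> a p" "x p + y p - x' p \<noteq> a p"
    using assms(2) by (simp_all add: x'_def avec_Suc_Suc two_point_def)
  moreover have "vlex_less x' x"
    unfolding vlex_less_def using assms(2) by (intro exI[of _ p]) (auto simp: x'_def two_point_def)
  ultimately show False using minimal_pair_fst_least[OF assms(1), of x'] by metis
qed

lemma minimal_pair_penult_le_1:
  assumes "minimal_pair x y" "i < p" "x = two_point i 1 (Suc p) (d - 1)"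
  shows "y p \<le> 1"
proof (rule ccontr)
  assume "\<not> y p \<le> 1"
  define x' where "x' = two_point p 2 (Suc p) (d - 2)"
  have "x' \<in> V n d" using two_point_last_in_V[of p 2] two_le_d by (simp add: x'_def)
  moreover have "\<forall>k. x' k \<le> x k + y k"
    using assms(2,3) \<open>\<not> y p \<le> 1\<close> by (auto simp: x'_def two_point_def)
  moreover have "x' p \<noteq> a p" "x i + y i - x' i \<noteq> a i"
    using assms(2,3) by (simp_all add: x'_def avec_Suc_Suc two_point_def)
  moreover have "vlex_less x' x"
    unfolding vlex_less_def using assms(2,3) by (intro exI[of _ i]) (auto simp: x'_def two_point_def)
  ultimately show False using minimal_pair_fst_least[OF assms(1), of x'] by metis
qed

text \<open>Greedy lexicographic minimisation of the first link puts the support of y weakly below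
  that of x; the other two alternatives are the pairs where greediness would produce a, so that
  x is a with one unit moved.\<close>

definition pair_shape :: "(nat \<Rightarrow> nat) \<Rightarrow> (nat \<Rightarrow> nat) \<Rightarrow> bool" where
  "pair_shape x y \<longleftrightarrow>
     support_le y x
   \<or> x = two_point p 2 (Suc p) (d - 2) \<and> y (Suc p) = 1
   \<or> (\<exists>i<p. x = two_point i 1 (Suc p) (d - 1) \<and> y (Suc p) = 0 \<and> y p = 1
          \<and> (\<forall>j. i < j \<and> j < p \<longrightarrow> y j = 0))"

lemma minimal_pair_shape_if_one_below_penult:
  assumes "minimal_pair x y" "i < p" "x = two_point i 1 (Suc p) (d - 1)" "0 < y p"
  shows "pair_shape x y"
proof -
  have y_off: "y k = 0" if "i < k" "k \<noteq> p" for k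
  proof (rule ccontr)
    assume "y k \<noteq> 0"
    then have "x p = a p"
      using minimal_pair_agrees_off_shift[OF assms(1), of i k p] assms(2,3) that
      by (auto simp: two_point_def)
    then show False using assms(2,3) by (simp add: avec_Suc_Suc two_point_def)
  qed
  have "y p = 1" using minimal_pair_penult_le_1[OF assms(1-3)] assms(4) by simp
  then show ?thesis using y_off assms(2,3) unfolding pair_shape_def by auto
qed

lemma minimal_pair_shape:
  assumes "minimal_pair x y"
  shows "pair_shape x y"
proof (cases "support_le y x")
  case True
  then show ?thesis by (simp add: pair_shape_def)
next
  case False
  then obtain i j where ij: "i < j" "0 < x i" "0 < y j"
    unfolding support_le_def by (meson not_le)
  have shift: "x(i := x i - 1, j := x j + 1) = a"
    using minimal_pair_shift_eq_a[OF assms ij] .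
  then have x_eq: "x = a(i := a i + 1, j := a j - 1)"
    using fun_upd_shift_inverse ij(1,2) by blast
  have "0 < a j" using fun_cong[OF shift, of j] by simp
  then have "j = p \<or> j = Suc p" by (auto simp: avec_Suc_Suc two_point_def split: if_splits)
  then show ?thesis
  proof
    assume "j = p"
    then have "i < p" using ij by simp
    moreover have "x = two_point i 1 (Suc p) (d - 1)"
      using x_eq \<open>j = p\<close> \<open>i < p\<close> by (auto simp: avec_Suc_Suc two_point_def fun_eq_iff)
    ultimately show ?thesis
      using minimal_pair_shape_if_one_below_penult assms ij(3) \<open>j = p\<close> by blast
  next
    assume "j = Suc p"
    show ?thesis
    proof (cases "i = p")
      case True
      then have x_is: "x = two_point p 2 (Suc p) (d - 2)"
        using x_eq \<open>j = Suc p\<close> by (auto simp: avec_Suc_Suc two_point_def fun_eq_iff)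
      have "y (Suc p) = 1"
        using minimal_pair_last_le_1[OF assms x_is] ij \<open>j = Suc p\<close> by simp
      then show ?thesis using x_is unfolding pair_shape_def by blast
    next
      case False
      then have "i < p" using ij \<open>j = Suc p\<close> by simp
      then have "0 < x p" using x_eq \<open>j = Suc p\<close> by (simp add: avec_Suc_Suc two_point_def)
      then have "x i = a i"
        using minimal_pair_agrees_off_shift[OF assms, of p "Suc p" i] ij \<open>j = Suc p\<close> \<open>i < p\<close>
        by simp
      then show ?thesis using x_eq ij(1) by simp
    qed
  qed
qed

lemma pair_shape_last_le_1:
  assumes "pair_shape (two_point p 2 (Suc p) (d - 2)) v"
  shows "v (Suc p) \<le> 1"
  using assms support_le_zero[of v _ p "Suc p"] unfolding pair_shape_def
  by (auto simp: two_point_def fun_eq_iff dest: spec[of _ p])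

lemma pair_shape_last_both_1:
  assumes "pair_shape y z" "y \<in> V n d" "y (Suc p) = 1" "z (Suc p) = 1"
  shows "d = 3"
  using assms(1) unfolding pair_shape_def
proof (elim disjE conjE exE)
  assume "support_le z y"
  then have "\<forall>k<Suc p. y k = 0" using assms(4) support_le_zero[of z y] by (metis not_gr0 zero_less_one)
  then show "d = 3" using V_last_two[OF assms(2)] assms(3) two_le_d by simp
next
  assume "y = two_point p 2 (Suc p) (d - 2)"
  then show "d = 3" using assms(3) two_le_d by (simp add: two_point_def)
qed (use assms(4) in simp)

lemma pair_shape_below_penult:
  assumes "i < p" "pair_shape (two_point i 1 (Suc p) (d - 1)) v"
  shows "v (Suc p) = 0 \<and> v p \<le> 1 \<and> (\<forall>j. i < j \<and> j < p \<longrightarrow> v j = 0)"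
  using assms(2) unfolding pair_shape_def
proof (elim disjE conjE exE)
  assume "support_le v (two_point i 1 (Suc p) (d - 1))"
  then have "\<forall>j>i. v j = 0" using support_le_zero[of v _ i] by (simp add: two_point_def)
  then show ?thesis using assms(1) by simp
next
  assume "two_point i 1 (Suc p) (d - 1) = two_point p 2 (Suc p) (d - 2)"
  from fun_cong[OF this, of p] show ?thesis using assms(1) by (simp add: two_point_def)
next
  fix i' assume "two_point i 1 (Suc p) (d - 1) = two_point i' 1 (Suc p) (d - 1)" "i' < p"
  moreover assume "v (Suc p) = 0" "v p = 1" "\<forall>j. i' < j \<and> j < p \<longrightarrow> v j = 0"
  moreover have "i' = i"
    using fun_cong[OF \<open>two_point i 1 _ _ = two_point i' 1 _ _\<close>, of i] assms(1)
    by (auto simp: two_point_def split: if_splits)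
  ultimately show ?thesis by simp
qed

lemma pair_shape_penult_both_1:
  assumes "pair_shape y z" "y \<in> V n d" "y (Suc p) = 0" "y p = 1" "z p = 1"
  shows False
  using assms(1) unfolding pair_shape_def
proof (elim disjE conjE exE)
  assume "support_le z y"
  then have "\<forall>k<p. y k = 0" using assms(5) support_le_zero[of z y] by (metis not_gr0 zero_less_one)
  then show False using V_last_two[OF assms(2)] assms(3,4) two_le_d by simp
qed (use assms(3,4) two_le_d in \<open>auto simp: two_point_def\<close>)

lemma not_vlex_less_if_two_at_penult:
  assumes "d \<noteq> 3" "x = two_point p 2 (Suc p) (d - 2)" "y \<in> V n d"
    and "pair_shape x y" "pair_shape x z" "pair_shape y z"
    and "w \<in> V n d" "w \<noteq> a" "\<forall>k. w k \<le> x k + y k + z k"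
  shows "\<not> vlex_less w x"
proof
  assume "vlex_less w x"
  moreover have "x \<in> V n d" using assms(2) two_point_last_in_V[of p 2] two_le_d by simp
  ultimately obtain i where "i \<le> p" and below: "\<forall>j<i. w j = x j" and "w i < x i"
    using vlex_less_V_first_difference assms(7) by blast
  then have "i = p" using assms(2) by (auto simp: two_point_def split: if_splits)
  have "y (Suc p) \<le> 1" "z (Suc p) \<le> 1"
    using pair_shape_last_le_1 assms(2,4,5) by blast+
  moreover have "y (Suc p) + z (Suc p) \<noteq> 2"
    using pair_shape_last_both_1[OF assms(6,3)] assms(1) \<open>y (Suc p) \<le> 1\<close> \<open>z (Suc p) \<le> 1\<close>
    by linarith
  ultimately have "w (Suc p) \<le> d - 1"
    using assms(2,9) two_le_d by (auto simp: two_point_def dest: spec[of _ "Suc p"])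
  have "w k \<le> a k" for k
    using below \<open>i = p\<close> \<open>w i < x i\<close> \<open>w (Suc p) \<le> d - 1\<close> V_support[OF assms(7), of k] assms(2)
    by (cases k "Suc p" rule: linorder_cases) (auto simp: avec_Suc_Suc two_point_def)
  then have "w = a" using V_le_imp_eq assms(7) a_in_V by blast
  with assms(8) show False by simp
qed

lemma not_vlex_less_if_one_below_penult:
  assumes "i' < p" "x = two_point i' 1 (Suc p) (d - 1)" "y \<in> V n d"
    and "pair_shape x y" "pair_shape x z" "pair_shape y z"
    and "w \<in> V n d" "w \<noteq> a" "\<forall>k. w k \<le> x k + y k + z k"
  shows "\<not> vlex_less w x"
proof
  assume "vlex_less w x"
  moreover have "x \<in> V n d" using assms(1,2) two_point_last_in_V[of i' 1] two_le_d by simp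
  ultimately obtain i where "i \<le> p" and below: "\<forall>j<i. w j = x j" and "w i < x i"
    using vlex_less_V_first_difference assms(7) by blast
  then have "i = i'" using assms(2) by (auto simp: two_point_def split: if_splits)
  have y: "y (Suc p) = 0 \<and> y p \<le> 1 \<and> (\<forall>j. i' < j \<and> j < p \<longrightarrow> y j = 0)"
    and z: "z (Suc p) = 0 \<and> z p \<le> 1 \<and> (\<forall>j. i' < j \<and> j < p \<longrightarrow> z j = 0)"
    using pair_shape_below_penult assms(1,2,4,5) by blast+
  moreover have "y p + z p \<le> 1"
    using pair_shape_penult_both_1[OF assms(6,3)] y z by (cases "y p = 1") auto
  ultimately have "w k \<le> a k" for k
    using below \<open>i = i'\<close> \<open>w i < x i\<close> V_support[OF assms(7), of k] assms(1,2,9)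
    by (cases k "Suc p" rule: linorder_cases)
      (auto simp: avec_Suc_Suc two_point_def dest!: spec[of _ k] split: if_splits)
  then have "w = a" using V_le_imp_eq assms(7) a_in_V by blast
  with assms(8) show False by simp
qed

lemma minimal_triple_first_link_ge:
  assumes "d \<noteq> 3" "minimal_pair x y" "minimal_pair x z" "minimal_pair y z"
    and "w \<in> V n d" "w \<noteq> a" "\<forall>k. w k \<le> x k + y k + z k"
  shows "\<not> vlex_less w x"
proof -
  have shapes: "pair_shape x y" "pair_shape x z" "pair_shape y z"
    using minimal_pair_shape assms(2-4) by blast+
  have xV: "x \<in> V n d" and yV: "y \<in> V n d" using minimal_pair_in_V assms(2) by auto
  consider "x = two_point p 2 (Suc p) (d - 2)"
    | i' where "i' < p" "x = two_point i' 1 (Suc p) (d - 1)"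
    | "support_le y x" "support_le z x"
    using shapes(1,2) unfolding pair_shape_def by blast
  then show ?thesis
  proof cases
    case 1
    then show ?thesis using not_vlex_less_if_two_at_penult assms(1,5-7) yV shapes by blast
  next
    case 2
    then show ?thesis using not_vlex_less_if_one_below_penult assms(5-7) yV shapes by blast
  next
    case 3
    then show ?thesis using not_vlex_less_if_support_le assms(5,7) xV by blast
  qed
qed

theorem minimal_triple:
  assumes "d \<noteq> 3" "minimal_pair x y" "minimal_pair y z" "minimal_pair x z"
  shows "minimal_chain n d a [x, y, z]"
  unfolding minimal_chain_def
proof (intro conjI allI impI)
  have "x \<in> V n d" "y \<in> V n d" "z \<in> V n d" using minimal_pair_in_V assms(2,3) by auto
  then show "is_chain n d (length [x, y, z]) [x, y, z]" by (simp add: is_chain_def)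
next
  fix w assume w: "is_chain n d (length [x, y, z]) w \<and> chain_sum w = chain_sum [x, y, z]"
  have "a \<notin> set [x, y, z]" using assms(2,3) by (auto simp: minimal_pair_def)
  show "w = [x, y, z] \<or> chain_less a [x, y, z] w"
  proof (cases "a \<in> set w")
    case True
    then show ?thesis using chain_less_if_mem \<open>a \<notin> set [x, y, z]\<close> by blast
  next
    case False
    obtain w1 w2 w3 where w_eq: "w = [w1, w2, w3]"
      using w by (auto simp: is_chain_def numeral_3_eq_3 length_Suc_conv)
    have sums: "w1 k + w2 k + w3 k = x k + y k + z k" for k
      using fun_cong[OF conjunct2[OF w], of k] by (simp add: w_eq chain_sum_def add.assoc)
    have links: "w1 \<in> V n d" "w2 \<in> V n d" "w3 \<in> V n d" "a \<notin> set [w2, w3]" "w1 \<noteq> a"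
      using w False by (auto simp: w_eq is_chain_def)
    have "w1 k \<le> x k + y k + z k" for k using sums[of k] by linarith
    then have "\<not> vlex_less w1 x"
      using minimal_triple_first_link_ge[OF assms(1,2,4,3) links(1,5)] by blast
    then have "x = w1 \<or> vlex_less x w1" using vlex_less_linear by blast
    moreover have "[w2, w3] = [y, z] \<or> chain_lex_less [y, z] [w2, w3]" if "x = w1"
    proof (rule minimal_chain_lex_least)
      show "minimal_chain n d a [y, z]" "a \<notin> set [y, z]" using assms(3) by (auto simp: minimal_pair_def)
      show "is_chain n d (length [y, z]) [w2, w3]" using links by (simp add: is_chain_def)
      show "chain_sum [w2, w3] = chain_sum [y, z]" using sums that by (simp add: chain_sum_def)
    qed (use links in simp)
    ultimately have "w = [x, y, z] \<or> chain_lex_less [x, y, z] w"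
      using w_eq by auto
    then show ?thesis
      using chain_less_iff_chain_lex_less \<open>a \<notin> set [x, y, z]\<close> False by blast
  qed
qed

end

theorem lemma2p6:
  fixes n d :: nat and x y z :: "nat \<Rightarrow> nat"
  assumes "n \<ge> 2" and "d \<ge> 2" and "d \<noteq> 3"
    and "x \<in> V n d - {avec n d}" and "y \<in> V n d - {avec n d}" and "z \<in> V n d - {avec n d}"
    and "minimal_chain n d (avec n d) [x, y]"
    and "minimal_chain n d (avec n d) [y, z]"
    and "minimal_chain n d (avec n d) [x, z]"
  shows "minimal_chain n d (avec n d) [x, y, z]"
proof -
  obtain p where n: "n = Suc (Suc p)" using assms(1) by (metis add_2_eq_Suc le_Suc_ex)
  interpret avec_setting p d using assms(2) by unfold_locales
  show ?thesis
    using minimal_triple assms(3-9) unfolding n minimal_pair_def by blast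
qed

end
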